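(* Let $A\in\mathbb{R}^{n\times n}$ be a Hurwitz matrix. Then for every $r>0$, $0\in\mathbb{R}^n$ is URGAS for the hybrid system (2.2) corresponding to the implicit Euler method applied to $\dot x=Ax$ with $\varphi(x)\equiv r$, i.e. with $F(h,x):=A(I-hA)^{-1}x$ (so that arbitrary step sizes $h_i\in(0,r]$ are allowed).
   Context: A matrix is Hurwitz if all its eigenvalues have negative real part (then $I-hA$ is invertible for all $h\ge0$). The hybrid system (2.2): for each locally bounded $u:\mathbb{R}^+\to\mathbb{R}^+$ and $x_0$, $\tau_0=0$, $x(0)=x_0$, $h_i=\varphi(x(\tau_i))\exp(-u(\tau_i))$, $\tau_{i+1}=\tau_i+h_i$, $x(t)=x(\tau_i)+(t-\tau_i)F(h_i,x(\tau_i))$ on $[\tau_i,\tau_{i+1}]$; solution $x(t,x_0;u)$. URGAS: (a) for every $\varepsilon>0$ there is $\delta>0$ with $|x_0|<\delta\Rightarrow|x(t,x_0;u)|<\varepsilon$ for all $t\ge0$ and all $u$; (b) for every $R$, $\sup\{|x(t,x_0;u)|:t\ge0,|x_0|\le R,u\}<\infty$; (c) for all $\varepsilon,R$ there is $T$ with $|x(t,x_0;u)|\le\varepsilon$ for $t\ge T$, $|x_0|\le R$, all locally bounded $u\ge0$. *)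

theory Defs
  imports "HOL-Analysis.Analysis"
begin

definition hurwitz :: "real^'n^'n \<Rightarrow> bool" where
  "hurwitz A \<longleftrightarrow>
     (\<forall>(c::complex) (v::complex^'n). v \<noteq> 0 \<and>
        (\<chi> i j. complex_of_real (A $ i $ j)) *v v = c *s v \<longrightarrow> Re c < 0)"

fun hyb_grid :: "(real^'n \<Rightarrow> real) \<Rightarrow> (real \<Rightarrow> real^'n \<Rightarrow> real^'n) \<Rightarrow> real^'n
                 \<Rightarrow> (real \<Rightarrow> real) \<Rightarrow> nat \<Rightarrow> real \<times> (real^'n)" where
  "hyb_grid \<phi> F x0 u 0 = (0, x0)"
| "hyb_grid \<phi> F x0 u (Suc i) =
     (let (\<tau>, x) = hyb_grid \<phi> F x0 u i; h = \<phi> x * exp (- u \<tau>) in (\<tau> + h, x + h *\<^sub>R F h x))"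

definition hyb_tau where "hyb_tau \<phi> F x0 u i = fst (hyb_grid \<phi> F x0 u i)"
definition hyb_step where "hyb_step \<phi> F x0 u i = \<phi> (snd (hyb_grid \<phi> F x0 u i)) * exp (- u (hyb_tau \<phi> F x0 u i))"

definition hyb_sol :: "(real^'n \<Rightarrow> real) \<Rightarrow> (real \<Rightarrow> real^'n \<Rightarrow> real^'n) \<Rightarrow> real^'n
                 \<Rightarrow> (real \<Rightarrow> real) \<Rightarrow> real \<Rightarrow> real^'n" where
  "hyb_sol \<phi> F x0 u t =
     (let i = (LEAST i. t < hyb_tau \<phi> F x0 u (Suc i));
          xi = snd (hyb_grid \<phi> F x0 u i)
      in xi + (t - hyb_tau \<phi> F x0 u i) *\<^sub>R F (hyb_step \<phi> F x0 u i) xi)"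

definition admissible_input :: "(real \<Rightarrow> real) \<Rightarrow> bool" where
  "admissible_input u \<longleftrightarrow> (\<forall>t\<ge>0. u t \<ge> 0) \<and> (\<forall>T\<ge>0. \<exists>M. \<forall>t\<in>{0..T}. \<bar>u t\<bar> \<le> M)"

definition URGAS :: "(real^'n \<Rightarrow> real) \<Rightarrow> (real \<Rightarrow> real^'n \<Rightarrow> real^'n) \<Rightarrow> bool" where
  "URGAS \<phi> F \<longleftrightarrow>
     (\<forall>\<epsilon>>0. \<exists>\<delta>>0. \<forall>x0 u t. norm x0 < \<delta> \<and> admissible_input u \<and> t \<ge> 0
                         \<longrightarrow> norm (hyb_sol \<phi> F x0 u t) < \<epsilon>)
   \<and> (\<forall>R. \<exists>B. \<forall>x0 u t. norm x0 \<le> R \<and> admissible_input u \<and> t \<ge> 0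
                         \<longrightarrow> norm (hyb_sol \<phi> F x0 u t) \<le> B)
   \<and> (\<forall>\<epsilon>>0. \<forall>R. \<exists>T. \<forall>x0 u t. norm x0 \<le> R \<and> admissible_input u \<and> t \<ge> T
                         \<longrightarrow> norm (hyb_sol \<phi> F x0 u t) \<le> \<epsilon>)"

definition implicit_euler_F :: "real^'n^'n \<Rightarrow> real \<Rightarrow> real^'n \<Rightarrow> real^'n" where
  "implicit_euler_F A h x = (A ** matrix_inv (mat 1 - h *\<^sub>R A)) *v x"

end

theory Submission
  imports Defs "Jordan_Normal_Form.Schur_Decomposition"
begin

text \<open>
  A Hurwitz matrix A is, over the complex numbers, similar to an upper
  triangular matrix (Schur decomposition) whose diagonal consists of eigenvalues, i.e.
  has real parts at most -m < 0.  Conjugating further with diag(1, e, e^2, ...) for a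
  small e > 0 shrinks the strictly upper triangular part, so A is similar, via some
  invertible W, to a matrix C that is strictly dissipative: Re<z, Cz> <= -mu |z|^2.
  Hence V(x) = |W x| is a quadratic Lyapunov function for the implicit Euler method:
  one step y = (I - hA)^-1 x satisfies V(y)^2 (1 + 2 mu h) <= V(x)^2, and since all
  steps satisfy 0 < h <= r this gives V(x_i)^2 <= exp(-kappa tau_i) V(x_0)^2 with a
  rate kappa independent of the input u.  The solution of the hybrid system is a
  convex combination of two consecutive grid points, so it decays exponentially
  uniformly in u, and uniform exponential decay implies URGAS.
\<close>

no_notation Matrix.vec_index (infixl "$" 100)

text \<open>The identity matrix of HOL-Analysis (the name mat is overloaded by Jordan_Normal_Form).\<close>
abbreviation cart_one :: "'a::semiring_1^'n::finite^'n" where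
  "cart_one \<equiv> Finite_Cartesian_Product.mat 1"

definition enum_n :: "nat \<Rightarrow> 'n::finite" where
  "enum_n = (SOME e. bij_betw e {..<CARD('n)} UNIV)"

lemma enum_n_bij: "bij_betw (enum_n :: nat \<Rightarrow> 'n::finite) {..<CARD('n)} UNIV"
proof -
  have "\<exists>e::nat \<Rightarrow> 'n. bij_betw e {..<CARD('n)} UNIV"
    using ex_bij_betw_nat_finite[of "UNIV :: 'n set"] by (auto simp: lessThan_atLeast0)
  thus ?thesis unfolding enum_n_def by (rule someI_ex)
qed

definition idx_n :: "'n::finite \<Rightarrow> nat" where
  "idx_n = inv_into {..<CARD('n)} enum_n"

lemma idx_n_lt: "idx_n (i::'n::finite) < CARD('n)"
  using enum_n_bij[where 'n='n] unfolding idx_n_def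
  by (metis UNIV_I bij_betw_def inv_into_into lessThan_iff)

lemma enum_idx[simp]: "enum_n (idx_n (i::'n::finite)) = i"
  using enum_n_bij[where 'n='n] unfolding idx_n_def
  by (simp add: bij_betw_inv_into_right)

lemma idx_enum[simp]: "a < CARD('n) \<Longrightarrow> idx_n (enum_n a :: 'n::finite) = a"
  using enum_n_bij[where 'n='n] unfolding idx_n_def
  by (simp add: bij_betw_inv_into_left)

lemma idx_n_inj: "idx_n (i::'n::finite) = idx_n j \<longleftrightarrow> i = j"
  by (metis enum_idx)

lemma sum_UNIV_enum: "(\<Sum>k\<in>(UNIV::'n::finite set). f k) = (\<Sum>a<CARD('n). f (enum_n a))"
  using sum.reindex_bij_betw[OF enum_n_bij, of f] by simp

text \<open>Translation between square matrices of both libraries via the enumeration; it is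
  compatible with products and the identity, which is all the Schur transfer needs.\<close>
definition cart_of_mat :: "'a::comm_ring_1 Matrix.mat \<Rightarrow> 'a^'n::finite^'n" where
  "cart_of_mat M = (\<chi> i j. M $$ (idx_n i, idx_n j))"

definition mat_of_cart :: "'a::comm_ring_1^'n::finite^'n \<Rightarrow> 'a Matrix.mat" where
  "mat_of_cart X = Matrix.mat CARD('n) CARD('n) (\<lambda>(a,b). X $ enum_n a $ enum_n b)"

lemma cart_of_mat_of_cart: "cart_of_mat (mat_of_cart X) = X"
  unfolding cart_of_mat_def mat_of_cart_def
  by (simp add: Finite_Cartesian_Product.vec_eq_iff idx_n_lt)

lemma cart_of_mat_mult:
  assumes "M \<in> carrier_mat CARD('n) CARD('n)" "N \<in> carrier_mat CARD('n) CARD('n)"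
  shows "(cart_of_mat (M * N) :: 'a::comm_ring_1^'n::finite^'n) = cart_of_mat M ** cart_of_mat N"
proof -
  have "(cart_of_mat (M * N) :: 'a^'n^'n) $ i $ j = (cart_of_mat M ** cart_of_mat N) $ i $ j" for i j
  proof -
    have "(cart_of_mat (M * N) :: 'a^'n^'n) $ i $ j
        = (\<Sum>a<CARD('n). M $$ (idx_n i, a) * N $$ (a, idx_n j))"
      using assms idx_n_lt[of i] idx_n_lt[of j]
      by (simp add: cart_of_mat_def scalar_prod_def lessThan_atLeast0 row_def col_def)
    also have "\<dots> = (cart_of_mat M ** cart_of_mat N) $ i $ j"
      by (simp add: matrix_matrix_mult_def cart_of_mat_def sum_UNIV_enum)
    finally show ?thesis .
  qed
  thus ?thesis by (simp add: Finite_Cartesian_Product.vec_eq_iff)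
qed

lemma cart_of_mat_one: "(cart_of_mat (1\<^sub>m CARD('n)) :: 'a::comm_ring_1^'n::finite^'n) = cart_one"
  by (simp add: Finite_Cartesian_Product.vec_eq_iff cart_of_mat_def idx_n_lt
      Finite_Cartesian_Product.mat_def idx_n_inj)

lemma eigenvalue_mat_of_cart:
  fixes X :: "'a::comm_ring_1^'n::finite^'n"
  assumes "eigenvalue (mat_of_cart X) k"
  shows "\<exists>w. w \<noteq> 0 \<and> X *v w = k *s w"
proof -
  obtain v where v: "v \<in> carrier_vec CARD('n)" "v \<noteq> 0\<^sub>v CARD('n)" "mat_of_cart X *\<^sub>v v = k \<cdot>\<^sub>v v"
    using assms unfolding eigenvalue_def eigenvector_def by (auto simp: mat_of_cart_def)
  define w where "w = (\<chi> i::'n. vec_index v (idx_n i))"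
  have "w \<noteq> 0"
  proof
    assume "w = 0"
    hence "vec_index v a = 0" if "a < CARD('n)" for a
      using that by (metis (no_types, lifting) idx_enum vec_lambda_beta w_def zero_index)
    thus False using v(1,2) by (auto simp: Matrix.vec_eq_iff)
  qed
  moreover have "(X *v w) $ i = (k *s w) $ i" for i
  proof -
    have "vec_index (mat_of_cart X *\<^sub>v v) (idx_n i) = k * vec_index v (idx_n i)"
      using v(1,3) idx_n_lt[of i] by simp
    moreover have "vec_index (mat_of_cart X *\<^sub>v v) (idx_n i)
        = (\<Sum>a<CARD('n). X $ i $ enum_n a * vec_index v a)"
      using v(1) idx_n_lt[of i] by (simp add: mat_of_cart_def scalar_prod_def lessThan_atLeast0 row_def)
    moreover have "(X *v w) $ i = (\<Sum>a<CARD('n). X $ i $ enum_n a * vec_index v a)"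
      by (auto simp add: matrix_vector_mult_def w_def sum_UNIV_enum intro!: sum.cong)
    ultimately show ?thesis by (simp add: w_def)
  qed
  ultimately show ?thesis by (auto simp: Finite_Cartesian_Product.vec_eq_iff)
qed

subsection \<open>Schur triangularisation of complex Cartesian matrices\<close>

lemma schur_complex:
  fixes M :: "complex Matrix.mat"
  assumes M: "M \<in> carrier_mat n n"
  shows "\<exists>B P Q. B \<in> carrier_mat n n \<and> P \<in> carrier_mat n n \<and> Q \<in> carrier_mat n n \<and>
     P * Q = 1\<^sub>m n \<and> Q * P = 1\<^sub>m n \<and> M = P * B * Q \<and> upper_triangular B \<and>
     (\<forall>i<n. eigenvalue M (B $$ (i,i)))"
proof -
  obtain es where es: "char_poly M = (\<Prod>a\<leftarrow>es. [:- a, 1:])" "length es = n"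
    using char_poly_factorized[OF M] by blast
  obtain B P Q where sd: "schur_decomposition M es = (B,P,Q)"
    by (cases "schur_decomposition M es") auto
  from schur_decomposition[OF M es(1) sd]
  have sim: "similar_mat_wit M B P Q" and ut: "upper_triangular B" and dg: "diag_mat B = es"
    by auto
  from sim M have car: "B \<in> carrier_mat n n" "P \<in> carrier_mat n n" "Q \<in> carrier_mat n n"
    and eq: "P * Q = 1\<^sub>m n" "Q * P = 1\<^sub>m n" "M = P * B * Q"
    unfolding similar_mat_wit_def Let_def by auto
  have "eigenvalue M (B $$ (i,i))" if i: "i < n" for i
  proof -
    have "B $$ (i,i) \<in> set es" using dg i car unfolding diag_mat_def by auto
    hence "poly (char_poly M) (B $$ (i,i)) = 0" unfolding es(1)
      by (auto simp: poly_prod_list prod_list_zero_iff)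
    thus ?thesis using eigenvalue_root_char_poly[OF M] by simp
  qed
  thus ?thesis using car eq ut by blast
qed

text \<open>The same in Cartesian form; triangularity refers to the enumeration of the index type.\<close>
lemma cart_schur:
  fixes X :: "complex^'n::finite^'n"
  obtains B P Q :: "complex^'n^'n"
  where "P ** Q = cart_one" "Q ** P = cart_one" "X = P ** B ** Q"
    "\<And>i j. idx_n j < idx_n i \<Longrightarrow> B$i$j = 0"
    "\<And>i. \<exists>w. w \<noteq> 0 \<and> X *v w = B$i$i *s w"
proof -
  have M: "mat_of_cart X \<in> carrier_mat CARD('n) CARD('n)" by (simp add: mat_of_cart_def)
  obtain B P Q where car: "B \<in> carrier_mat CARD('n) CARD('n)" "P \<in> carrier_mat CARD('n) CARD('n)"
      "Q \<in> carrier_mat CARD('n) CARD('n)" and eq: "P * Q = 1\<^sub>m CARD('n)" "Q * P = 1\<^sub>m CARD('n)"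
      "mat_of_cart X = P * B * Q" and ut: "upper_triangular B"
      and ev: "\<forall>i<CARD('n). eigenvalue (mat_of_cart X) (B $$ (i,i))"
    using schur_complex[OF M] by blast
  define Bc Pc Qc where "Bc = (cart_of_mat B :: complex^'n^'n)"
    and "Pc = (cart_of_mat P :: complex^'n^'n)" and "Qc = (cart_of_mat Q :: complex^'n^'n)"
  have "X = cart_of_mat (mat_of_cart X)" by (simp add: cart_of_mat_of_cart)
  also have "\<dots> = Pc ** Bc ** Qc"
    unfolding eq(3) Pc_def Bc_def Qc_def using car by (simp add: cart_of_mat_mult matrix_mul_assoc)
  finally have "X = Pc ** Bc ** Qc" .
  moreover have "Pc ** Qc = cart_one" "Qc ** Pc = cart_one"
    unfolding Pc_def Qc_def using car eq by (simp_all add: cart_of_mat_mult[symmetric] cart_of_mat_one)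
  moreover have "Bc$i$j = 0" if "idx_n j < idx_n i" for i j
    using ut car idx_n_lt that unfolding Bc_def cart_of_mat_def upper_triangular_def by auto
  moreover have "\<exists>w. w \<noteq> 0 \<and> X *v w = Bc$i$i *s w" for i
    using ev idx_n_lt[of i] by (intro eigenvalue_mat_of_cart) (simp add: Bc_def cart_of_mat_def)
  ultimately show thesis using that by blast
qed

text \<open>Hurwitz stability refers to complex eigenvectors, so real vectors and matrices are
  embedded entrywise into complex ones.\<close>
definition cmat :: "real^'n^'m \<Rightarrow> complex^'n^'m" where
  "cmat A = (\<chi> i j. complex_of_real (A$i$j))"

definition cx :: "real^'n \<Rightarrow> complex^'n" where
  "cx x = (\<chi> i. complex_of_real (x$i))"

lemma hurwitz_cmat:
  "hurwitz A \<longleftrightarrow> (\<forall>c v. v \<noteq> 0 \<and> cmat A *v v = c *s v \<longrightarrow> Re c < 0)"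
  by (simp add: hurwitz_def cmat_def)

lemma cx_mult: "cx (A *v x) = cmat A *v cx x"
  by (simp add: Finite_Cartesian_Product.vec_eq_iff cx_def cmat_def matrix_vector_mult_def)

lemma cx_diff: "cx (x - y) = cx x - cx y"
  by (simp add: Finite_Cartesian_Product.vec_eq_iff cx_def)

lemma cx_scaleR: "cx (h *\<^sub>R x) = h *\<^sub>R cx x"
  by (simp add: Finite_Cartesian_Product.vec_eq_iff cx_def complex_eq_iff)

lemma cx_eq_0_iff: "cx x = 0 \<longleftrightarrow> x = 0"
  by (simp add: Finite_Cartesian_Product.vec_eq_iff cx_def)

lemma norm_cx: "norm (cx x) = norm x"
  by (simp add: norm_vec_def cx_def)

lemma diag_mult_left:
  "((\<chi> i j. if i = j then d i else 0) ** (X::'a::semiring_1^'n::finite^'m::finite)) $ i $ j = d i * X$i$j"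
proof -
  have "(\<Sum>k\<in>UNIV. (if i = k then d i else 0) * X$k$j) = (\<Sum>k\<in>UNIV. if i = k then d i * X$k$j else 0)"
    by (rule sum.cong) auto
  thus ?thesis by (simp add: matrix_matrix_mult_def)
qed

lemma diag_mult_right:
  "((X::'a::semiring_1^'n::finite^'m::finite) ** (\<chi> i j. if i = j then d i else 0)) $ i $ j = X$i$j * d j"
proof -
  have "(\<Sum>k\<in>UNIV. X$i$k * (if k = j then d k else 0)) = (\<Sum>k\<in>UNIV. if k = j then X$i$k * d k else 0)"
    by (rule sum.cong) auto
  thus ?thesis by (simp add: matrix_matrix_mult_def)
qed

definition scal_diag :: "real \<Rightarrow> complex^'n::finite^'n" where
  "scal_diag e = (\<chi> i j. if i = j then complex_of_real (e ^ idx_n i) else 0)"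

lemma scal_diag_inverse:
  assumes "e \<noteq> 0"
  shows "scal_diag e ** scal_diag (1/e) = cart_one"
proof -
  have "complex_of_real e ^ k * (1 / complex_of_real e) ^ k = 1" for k
    using assms by (simp add: power_mult_distrib[symmetric])
  then show ?thesis unfolding scal_diag_def
    by (simp add: Finite_Cartesian_Product.vec_eq_iff diag_mult_left Finite_Cartesian_Product.mat_def)
qed

lemma scal_conj_entry:
  fixes B :: "complex^'n::finite^'n"
  shows "(scal_diag (1/e) ** B ** scal_diag e) $ i $ j
     = complex_of_real ((1/e) ^ idx_n i * e ^ idx_n j) * B$i$j"
proof -
  have "(scal_diag (1/e) ** B ** scal_diag e) $ i $ j
      = (scal_diag (1/e) ** B) $ i $ j * complex_of_real (e ^ idx_n j)"
    unfolding scal_diag_def[of e] by (rule diag_mult_right)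
  also have "(scal_diag (1/e) ** B) $ i $ j = complex_of_real ((1/e) ^ idx_n i) * B$i$j"
    unfolding scal_diag_def by (rule diag_mult_left)
  finally show ?thesis by (simp add: algebra_simps)
qed

text \<open>Conjugating an upper triangular matrix with diag(1, e, e^2, ...) multiplies the entry
  (i,j) above the diagonal by e^(j-i); for small e the off-diagonal part becomes small.\<close>
lemma scal_conj_offdiag_small:
  fixes B :: "complex^'n::finite^'n"
  assumes ut: "\<And>i j. idx_n j < idx_n i \<Longrightarrow> B$i$j = 0" and \<delta>: "\<delta> > 0"
  obtains e where "e > 0" "\<And>i j. i \<noteq> j \<Longrightarrow> norm ((scal_diag (1/e) ** B ** scal_diag e) $ i $ j) \<le> \<delta>"
proof -
  define K where "K = (\<Sum>i\<in>UNIV. \<Sum>j\<in>UNIV. norm (B$i$j))"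
  have K_bound: "norm (B$i$j) \<le> K" for i j
  proof -
    have "norm (B$i$j) \<le> (\<Sum>j\<in>UNIV. norm (B$i$j))" by (rule member_le_sum) auto
    also have "\<dots> \<le> K" unfolding K_def by (rule member_le_sum) (auto intro: sum_nonneg)
    finally show ?thesis .
  qed
  have K0: "K \<ge> 0" unfolding K_def by (intro sum_nonneg) auto
  define e where "e = min 1 (\<delta> / (K + 1))"
  have e0: "e > 0" and e1: "e \<le> 1" unfolding e_def using \<delta> K0 by auto
  have eK: "e * K \<le> \<delta>"
  proof -
    have "e * K \<le> \<delta> / (K + 1) * K" unfolding e_def using K0 by (intro mult_right_mono) auto
    also have "\<dots> \<le> \<delta>" using K0 \<delta> by (simp add: field_simps)
    finally show ?thesis .
  qed
  have "norm ((scal_diag (1/e) ** B ** scal_diag e) $ i $ j) \<le> \<delta>" if ij: "i \<noteq> j" for i j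
  proof (cases "idx_n j < idx_n i")
    case True
    thus ?thesis using ut \<delta> by (simp add: scal_conj_entry)
  next
    case False
    with ij idx_n_inj have lt: "idx_n i < idx_n j" by (metis linorder_neqE_nat)
    define f where "f = (1/e) ^ idx_n i * e ^ idx_n j"
    have "f = (1/e) ^ idx_n i * e ^ idx_n i * e ^ (idx_n j - idx_n i)"
      using lt unfolding f_def by (simp add: power_add[symmetric])
    also have "\<dots> = e ^ (idx_n j - idx_n i)" using e0 by (simp add: power_one_over)
    also have "\<dots> \<le> e ^ 1" using lt e0 e1 by (intro power_decreasing) auto
    finally have f_le: "f \<le> e" by simp
    have f0: "f \<ge> 0" unfolding f_def using e0 by simp
    have "norm ((scal_diag (1/e) ** B ** scal_diag e) $ i $ j) = norm (complex_of_real f * B$i$j)"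
      by (simp only: scal_conj_entry f_def)
    also have "\<dots> = f * norm (B$i$j)"
      using f0 by (simp only: norm_mult norm_of_real abs_of_nonneg)
    also have "\<dots> \<le> e * K" using f_le f0 K_bound[of i j] e0 by (intro mult_mono) auto
    also have "\<dots> \<le> \<delta>" by (rule eK)
    finally show ?thesis .
  qed
  with e0 that show thesis by blast
qed

subsection \<open>Hurwitz matrices are similar to strictly dissipative matrices\<close>

lemma inner_cmult_self: "inner (a::complex) (c * a) = Re c * (norm a)^2"
  unfolding cmod_power2 inner_complex_def by (simp add: algebra_simps power2_eq_square)

lemma norm_sq_vec: "(norm (z::'a::real_normed_vector^'n::finite))^2 = (\<Sum>i\<in>UNIV. (norm (z$i))^2)"
  unfolding norm_vec_def L2_set_def by (simp add: sum_nonneg)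

lemma sum_diag_plus_sym:
  fixes a b :: "'n::finite \<Rightarrow> real"
  shows "(\<Sum>i\<in>UNIV. \<Sum>j\<in>UNIV. (if i = j then a i else 0) + \<delta> * (b i + b j) / 2)
        = (\<Sum>i\<in>UNIV. a i) + \<delta> * CARD('n) * (\<Sum>i\<in>UNIV. b i)"
proof -
  have row: "(\<Sum>j\<in>UNIV. (if i = j then a i else 0) + \<delta> * (b i + b j) / 2)
     = a i + \<delta>/2 * (CARD('n) * b i + (\<Sum>j\<in>UNIV. b j))" for i
    by (simp add: sum.distrib sum_distrib_left[symmetric] sum_divide_distrib[symmetric] algebra_simps)
  have "(\<Sum>i\<in>UNIV. \<Sum>j\<in>UNIV. (if i = j then a i else 0) + \<delta> * (b i + b j) / 2)
      = (\<Sum>i\<in>UNIV. a i + \<delta>/2 * (CARD('n) * b i + (\<Sum>j\<in>UNIV. b j)))" by (simp only: row)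
  also have "\<dots> = (\<Sum>i\<in>UNIV. a i) + \<delta>/2 * (CARD('n) * (\<Sum>i\<in>UNIV. b i) + CARD('n) * (\<Sum>j\<in>UNIV. b j))"
    by (simp only: sum_distrib_left[symmetric] sum.distrib sum_constant)
  finally show ?thesis by (simp add: algebra_simps)
qed

lemma inner_dominant_diagonal:
  fixes C :: "complex^'n::finite^'n" and z :: "complex^'n"
  assumes dg: "\<And>i. Re (C$i$i) \<le> -m" and od: "\<And>i j. i \<noteq> j \<Longrightarrow> norm (C$i$j) \<le> \<delta>"
    and \<delta>: "\<delta> \<ge> 0"
  shows "inner z (C *v z) \<le> (-m + \<delta> * CARD('n)) * (norm z)^2"
proof -
  let ?n = "\<lambda>i. norm (z$i)"
  have entry: "inner (z$i) (C$i$j * z$j)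
      \<le> (if i = j then -m * (?n i)^2 else 0) + \<delta> * ((?n i)^2 + (?n j)^2) / 2" for i j
  proof (cases "i = j")
    case True
    have "inner (z$i) (C$i$j * z$j) = Re (C$i$i) * (?n i)^2" using True inner_cmult_self by simp
    also have "\<dots> \<le> -m * (?n i)^2" using mult_right_mono[OF dg[of i], of "(?n i)^2"] by simp
    also have "\<dots> \<le> -m * (?n i)^2 + \<delta> * ((?n i)^2 + (?n i)^2) / 2" using \<delta> by simp
    finally show ?thesis using True by simp
  next
    case False
    have "inner (z$i) (C$i$j * z$j) \<le> ?n i * norm (C$i$j * z$j)" by (rule norm_cauchy_schwarz)
    also have "\<dots> = norm (C$i$j) * (?n i * ?n j)" by (simp add: norm_mult)
    also have "\<dots> \<le> \<delta> * (?n i * ?n j)" using od[OF False] by (simp add: mult_right_mono)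
    also have "\<dots> \<le> \<delta> * ((?n i)^2 + (?n j)^2) / 2"
    proof -
      have "2 * (?n i * ?n j) \<le> (?n i)^2 + (?n j)^2"
        using sum_squares_bound[of "?n i" "?n j"] by (simp add: mult.assoc)
      from mult_left_mono[OF this \<delta>] show ?thesis by simp
    qed
    finally show ?thesis using False by simp
  qed
  have "inner z (C *v z) = (\<Sum>i\<in>UNIV. \<Sum>j\<in>UNIV. inner (z$i) (C$i$j * z$j))"
    by (simp add: inner_vec_def matrix_vector_mult_def inner_sum_right)
  also have "\<dots> \<le> (\<Sum>i\<in>UNIV. \<Sum>j\<in>UNIV.
      (if i = j then -m * (?n i)^2 else 0) + \<delta> * ((?n i)^2 + (?n j)^2) / 2)"
    by (intro sum_mono entry)
  also have "\<dots> = (\<Sum>i\<in>UNIV. -m * (?n i)^2) + \<delta> * CARD('n) * (\<Sum>i\<in>UNIV. (?n i)^2)"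
    by (rule sum_diag_plus_sym)
  also have "(\<Sum>i\<in>UNIV. -m * (?n i)^2) = -m * (\<Sum>i\<in>UNIV. (?n i)^2)"
    by (simp add: sum_distrib_left)
  finally show ?thesis by (simp add: norm_sq_vec algebra_simps)
qed

lemma hurwitz_similar_dissipative:
  fixes A :: "real^'n::finite^'n"
  assumes H: "hurwitz A"
  obtains W Wi C :: "complex^'n^'n" and \<mu> :: real
  where "\<mu> > 0" "Wi ** W = cart_one" "W ** cmat A = C ** W"
    "\<And>z. inner z (C *v z) \<le> -\<mu> * (norm z)^2"
proof -
  obtain B P Q :: "complex^'n^'n" where PQ: "P ** Q = cart_one" "Q ** P = cart_one"
    and AB: "cmat A = P ** B ** Q" and ut: "\<And>i j. idx_n j < idx_n i \<Longrightarrow> B$i$j = 0"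
    and ev: "\<And>i. \<exists>w. w \<noteq> 0 \<and> cmat A *v w = B$i$i *s w"
    using cart_schur[of "cmat A"] by metis
  have neg: "Re (B$i$i) < 0" for i
    using ev[of i] H unfolding hurwitz_cmat by blast
  define m where "m = Min (range (\<lambda>i. - Re (B$i$i)))"
  have m0: "m > 0" unfolding m_def using neg by (simp add: Min_gr_iff)
  have diag_le: "Re (B$i$i) \<le> -m" for i
  proof -
    have "m \<le> - Re (B$i$i)" unfolding m_def by (rule Min_le) auto
    thus ?thesis by simp
  qed
  define \<delta> where "\<delta> = m / (2 * CARD('n))"
  have \<delta>0: "\<delta> > 0" unfolding \<delta>_def using m0 by simp
  obtain e where e0: "e > 0"
    and off_small: "\<And>i j. i \<noteq> j \<Longrightarrow> norm ((scal_diag (1/e) ** B ** scal_diag e) $ i $ j) \<le> \<delta>"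
    using scal_conj_offdiag_small[OF ut \<delta>0] by blast
  define D Di where "D = (scal_diag e :: complex^'n^'n)" and "Di = (scal_diag (1/e) :: complex^'n^'n)"
  have DDi: "D ** Di = cart_one" unfolding D_def Di_def using e0 by (simp add: scal_diag_inverse)
  define C W Wi where "C = Di ** B ** D" and "W = Di ** Q" and "Wi = P ** D"
  have "Wi ** W = P ** (D ** Di) ** Q" unfolding Wi_def W_def by (simp add: matrix_mul_assoc)
  hence inv: "Wi ** W = cart_one" using PQ DDi by (simp add: matrix_mul_rid)
  have "W ** cmat A = Di ** (Q ** P) ** B ** Q" unfolding W_def AB by (simp add: matrix_mul_assoc)
  also have "\<dots> = Di ** B ** (D ** Di) ** Q" using PQ DDi by (simp add: matrix_mul_rid)
  also have "\<dots> = C ** W" unfolding C_def W_def by (simp add: matrix_mul_assoc)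
  finally have sim: "W ** cmat A = C ** W" .
  have "Re (C$i$i) \<le> -m" for i
    using diag_le[of i] e0 unfolding C_def D_def Di_def by (simp add: scal_conj_entry power_one_over)
  moreover have "norm (C$i$j) \<le> \<delta>" if "i \<noteq> j" for i j
    using off_small[OF that] unfolding C_def D_def Di_def .
  ultimately have "inner z (C *v z) \<le> -(m/2) * (norm z)^2" for z
    using inner_dominant_diagonal[of C m \<delta> z] \<delta>0 unfolding \<delta>_def by simp
  with m0 inv sim show thesis using that[of "m/2" Wi W C] by simp
qed

subsection \<open>One step of the implicit Euler method\<close>

text \<open>For h >= 0 the matrix I - hA is invertible, since 1/h is not an eigenvalue of A.\<close>
lemma invertible_I_minus_hA:
  fixes A :: "real^'n::finite^'n"
  assumes H: "hurwitz A" and h: "h \<ge> 0"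
  shows "invertible (cart_one - h *\<^sub>R A)"
proof -
  have "x = 0" if e: "(cart_one - h *\<^sub>R A) *v x = 0" for x
  proof (rule ccontr)
    assume x0: "x \<noteq> 0"
    from e have ex: "h *\<^sub>R (A *v x) = x"
      by (simp add: matrix_vector_mult_diff_rdistrib scaleR_matrix_vector_assoc[symmetric])
    with x0 have "h \<noteq> 0" by auto
    hence "A *v x = (1/h) *\<^sub>R (h *\<^sub>R (A *v x))" by simp
    with ex have "A *v x = (1/h) *\<^sub>R x" by simp
    hence "cmat A *v cx x = cx ((1/h) *\<^sub>R x)" by (simp only: cx_mult[symmetric])
    also have "\<dots> = complex_of_real (1/h) *s cx x"
      by (simp add: Finite_Cartesian_Product.vec_eq_iff cx_def)
    finally have "cmat A *v cx x = complex_of_real (1/h) *s cx x" .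
    moreover have "cx x \<noteq> 0" using x0 cx_eq_0_iff by blast
    ultimately have "Re (complex_of_real (1/h)) < 0" using H unfolding hurwitz_cmat by blast
    thus False using h by simp
  qed
  thus ?thesis by (simp add: invertible_left_inverse matrix_left_invertible_ker)
qed

lemma implicit_euler_step:
  fixes A :: "real^'n::finite^'n" and x :: "real^'n"
  assumes H: "hurwitz A" and h: "h \<ge> 0"
  shows "(x + h *\<^sub>R implicit_euler_F A h x) - h *\<^sub>R (A *v (x + h *\<^sub>R implicit_euler_F A h x)) = x"
proof -
  define R where "R = matrix_inv (cart_one - h *\<^sub>R A)"
  have inv: "(cart_one - h *\<^sub>R A) ** R = cart_one"
    using invertible_I_minus_hA[OF H h] unfolding R_def invertible_def matrix_inv_def
    by (rule someI2_ex) auto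
  define v where "v = R *v x"
  have vx: "v - h *\<^sub>R (A *v v) = x"
  proof -
    have "(cart_one - h *\<^sub>R A) *v v = x" unfolding v_def by (simp add: matrix_vector_mul_assoc inv)
    thus ?thesis by (simp add: matrix_vector_mult_diff_rdistrib scaleR_matrix_vector_assoc[symmetric])
  qed
  have "x + h *\<^sub>R implicit_euler_F A h x = x + h *\<^sub>R (A *v v)"
    unfolding implicit_euler_F_def v_def R_def by (simp add: matrix_vector_mul_assoc)
  also have "\<dots> = v" using vx by (metis diff_add_cancel)
  finally show ?thesis using vx by simp
qed

lemma norm_diff_scaleR_sq:
  fixes z w :: "'a::real_inner"
  shows "(norm (z - h *\<^sub>R w))^2 = (norm z)^2 - 2*h*inner z w + h^2*(norm w)^2"
  unfolding power2_norm_eq_inner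
  by (simp add: inner_diff_left inner_diff_right inner_commute[of w z] algebra_simps power2_eq_square)

lemma implicit_euler_contraction:
  fixes A :: "real^'n::finite^'n" and W C :: "complex^'n^'n"
  assumes WC: "W ** cmat A = C ** W" and diss: "\<And>z. inner z (C *v z) \<le> -\<mu> * (norm z)^2"
    and h: "h \<ge> 0" and step: "y - h *\<^sub>R (A *v y) = x"
  shows "(norm (W *v cx y))^2 * (1 + 2*\<mu>*h) \<le> (norm (W *v cx x))^2"
proof -
  define z where "z = W *v cx y"
  have "W *v cx x = z - h *\<^sub>R (C *v z)"
    unfolding step[symmetric] z_def cx_diff cx_scaleR cx_mult
    by (simp add: matrix_vector_mult_diff_distrib linear_scale[OF matrix_vector_mul_linear]
        matrix_vector_mul_assoc WC)
  hence "(norm (W *v cx x))^2 = (norm z)^2 - 2*h * inner z (C *v z) + h^2 * (norm (C *v z))^2"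
    by (simp only: norm_diff_scaleR_sq)
  moreover have "2*h * inner z (C *v z) \<le> 2*h * (-\<mu> * (norm z)^2)"
    using diss[of z] h by (intro mult_left_mono) auto
  moreover have "h^2 * (norm (C *v z))^2 \<ge> 0" by simp
  moreover have "(norm z)^2 * (1 + 2*\<mu>*h) = (norm z)^2 - 2*h * (-\<mu> * (norm z)^2)"
    by (simp add: algebra_simps)
  ultimately show ?thesis unfolding z_def[symmetric] by linarith
qed

text \<open>Since every step satisfies h <= r, the factor 1 + 2 mu h dominates exp(kappa h) for
  the rate kappa = 2 mu / (1 + 2 mu r), uniformly in h.\<close>
lemma exp_le_one_plus_step:
  fixes \<mu> r h :: real
  assumes "\<mu> > 0" "r > 0" "0 \<le> h" "h \<le> r"
  shows "1 \<le> (1 + 2*\<mu>*h) * exp (- (2*\<mu>/(1+2*\<mu>*r)) * h)"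
proof -
  define b where "b = 2*\<mu>*h / (1 + 2*\<mu>*h)"
  have nn: "2*\<mu>*h \<ge> 0" using assms by simp
  hence pos: "1 + 2*\<mu>*h > 0" by linarith
  have "2*\<mu>*h \<le> 2*\<mu>*r" using assms by simp
  hence "2*\<mu>*h / (1+2*\<mu>*r) \<le> b" unfolding b_def using pos nn by (intro frac_le) auto
  hence "exp (-b) \<le> exp (- (2*\<mu>/(1+2*\<mu>*r)) * h)" by simp
  moreover have "1 - b \<le> exp (-b)" using exp_ge_add_one_self[of "-b"] by simp
  ultimately have "1 - b \<le> exp (- (2*\<mu>/(1+2*\<mu>*r)) * h)" by linarith
  hence "(1 + 2*\<mu>*h) * (1 - b) \<le> (1 + 2*\<mu>*h) * exp (- (2*\<mu>/(1+2*\<mu>*r)) * h)"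
    using pos by (intro mult_left_mono) auto
  moreover have "(1 + 2*\<mu>*h) * (1 - b) = 1" unfolding b_def using pos by (simp add: field_simps)
  ultimately show ?thesis by simp
qed

subsection \<open>The hybrid system with constant step-size bound\<close>

definition hyb_state :: "(real^'n \<Rightarrow> real) \<Rightarrow> (real \<Rightarrow> real^'n \<Rightarrow> real^'n) \<Rightarrow> real^'n
    \<Rightarrow> (real \<Rightarrow> real) \<Rightarrow> nat \<Rightarrow> real^'n" where
  "hyb_state \<phi> F x0 u i = snd (hyb_grid \<phi> F x0 u i)"

lemma hyb_grid_0: "hyb_tau \<phi> F x0 u 0 = 0" "hyb_state \<phi> F x0 u 0 = x0"
  by (simp_all add: hyb_tau_def hyb_state_def)

lemma hyb_grid_Suc:
  "hyb_tau \<phi> F x0 u (Suc i) = hyb_tau \<phi> F x0 u i + hyb_step \<phi> F x0 u i"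
  "hyb_state \<phi> F x0 u (Suc i) = hyb_state \<phi> F x0 u i
     + hyb_step \<phi> F x0 u i *\<^sub>R F (hyb_step \<phi> F x0 u i) (hyb_state \<phi> F x0 u i)"
  by (simp_all add: hyb_tau_def hyb_step_def hyb_state_def split_def Let_def)

lemma hyb_step_const: "hyb_step (\<lambda>_. r) F x0 u i = r * exp (- u (hyb_tau (\<lambda>_. r) F x0 u i))"
  by (simp add: hyb_step_def)

lemma hyb_step_pos: "r > 0 \<Longrightarrow> hyb_step (\<lambda>_. r) F x0 u i > 0"
  by (simp add: hyb_step_const)

lemma hyb_tau_nonneg: "r > 0 \<Longrightarrow> hyb_tau (\<lambda>_. r) F x0 u i \<ge> 0"
  by (induction i) (auto simp: hyb_grid_0 hyb_grid_Suc intro: add_nonneg_nonneg less_imp_le[OF hyb_step_pos])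

lemma hyb_step_le:
  assumes "admissible_input u" "r > 0"
  shows "hyb_step (\<lambda>_. r) F x0 u i \<le> r"
proof -
  have "u (hyb_tau (\<lambda>_. r) F x0 u i) \<ge> 0"
    using assms hyb_tau_nonneg unfolding admissible_input_def by blast
  thus ?thesis using assms(2) by (simp add: hyb_step_const mult_left_le)
qed

text \<open>The grid exhausts the time axis: since u is bounded on [0,t], the steps taken before
  time t are bounded below, so finitely many of them pass t.\<close>
lemma hyb_tau_unbounded:
  assumes u: "admissible_input u" and r: "r > 0" and t: "t \<ge> 0"
  shows "\<exists>i. t < hyb_tau (\<lambda>_. r) F x0 u (Suc i)"
proof (rule ccontr)
  let ?\<tau> = "hyb_tau (\<lambda>_. r) F x0 u"
  assume "\<not> ?thesis"
  hence before_t: "?\<tau> i \<le> t" for i using t by (cases i) (auto simp: hyb_grid_0 not_less)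
  obtain M where M: "\<forall>s\<in>{0..t}. \<bar>u s\<bar> \<le> M" using u t unfolding admissible_input_def by blast
  define \<eta> where "\<eta> = r * exp (-M)"
  have step_ge: "\<eta> \<le> hyb_step (\<lambda>_. r) F x0 u i" for i
  proof -
    have "?\<tau> i \<in> {0..t}" using before_t[of i] hyb_tau_nonneg[OF r, of F x0 u i] by simp
    hence "u (?\<tau> i) \<le> M" using M by fastforce
    thus ?thesis unfolding \<eta>_def hyb_step_const using r by (simp add: mult_left_mono)
  qed
  have linear_growth: "real i * \<eta> \<le> ?\<tau> i" for i
  proof (induction i)
    case (Suc i)
    thus ?case using step_ge[of i] by (simp add: hyb_grid_Suc algebra_simps)
  qed (simp add: hyb_grid_0)
  obtain n where "t / \<eta> < real n" using reals_Archimedean2 by blast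
  hence "t < real n * \<eta>" using r by (simp add: \<eta>_def field_simps)
  with linear_growth[of n] before_t[of n] show False by simp
qed

lemma hyb_sol_between_grid_points:
  assumes u: "admissible_input u" and r: "r > 0" and t: "t \<ge> 0"
  obtains k s where "0 \<le> s" "s \<le> 1"
    "hyb_tau (\<lambda>_. r) F x0 u k \<le> t" "t < hyb_tau (\<lambda>_. r) F x0 u (Suc k)"
    "hyb_sol (\<lambda>_. r) F x0 u t
       = (1 - s) *\<^sub>R hyb_state (\<lambda>_. r) F x0 u k + s *\<^sub>R hyb_state (\<lambda>_. r) F x0 u (Suc k)"
proof -
  let ?\<tau> = "hyb_tau (\<lambda>_. r) F x0 u" and ?h = "hyb_step (\<lambda>_. r) F x0 u"
    and ?x = "hyb_state (\<lambda>_. r) F x0 u"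
  define k where "k = (LEAST i. t < ?\<tau> (Suc i))"
  have t_lt: "t < ?\<tau> (Suc k)" unfolding k_def using hyb_tau_unbounded[OF u r t] by (rule LeastI_ex)
  have t_ge: "?\<tau> k \<le> t"
  proof (cases k)
    case 0 thus ?thesis using t by (simp add: hyb_grid_0)
  next
    case (Suc j)
    thus ?thesis using not_less_Least[of j "\<lambda>i. t < ?\<tau> (Suc i)"] unfolding k_def by simp
  qed
  define s where "s = (t - ?\<tau> k) / ?h k"
  have hk: "?h k > 0" using hyb_step_pos[OF r] .
  have s: "0 \<le> s" "s \<le> 1" unfolding s_def using t_ge t_lt hk by (auto simp: hyb_grid_Suc field_simps)
  have "hyb_sol (\<lambda>_. r) F x0 u t = ?x k + (t - ?\<tau> k) *\<^sub>R F (?h k) (?x k)"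
    unfolding hyb_sol_def Let_def k_def hyb_state_def ..
  also have "(t - ?\<tau> k) *\<^sub>R F (?h k) (?x k) = s *\<^sub>R (?x (Suc k) - ?x k)"
    unfolding s_def using hk by (simp add: hyb_grid_Suc)
  finally have "hyb_sol (\<lambda>_. r) F x0 u t = (1 - s) *\<^sub>R ?x k + s *\<^sub>R ?x (Suc k)"
    by (simp add: algebra_simps)
  with s t_ge t_lt that show thesis by blast
qed

lemma hyb_sol_decay:
  assumes u: "admissible_input u" and r: "r > 0" and t: "t \<ge> 0" and K: "K \<ge> 0" and \<alpha>: "\<alpha> > 0"
    and grid: "\<And>i. norm (hyb_state (\<lambda>_. r) F x0 u i)
                   \<le> K * norm x0 * exp (- \<alpha> * hyb_tau (\<lambda>_. r) F x0 u i)"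
  shows "norm (hyb_sol (\<lambda>_. r) F x0 u t) \<le> K * exp (\<alpha> * r) * norm x0 * exp (- \<alpha> * t)"
proof -
  let ?\<tau> = "hyb_tau (\<lambda>_. r) F x0 u" and ?x = "hyb_state (\<lambda>_. r) F x0 u"
  obtain k s where s: "0 \<le> s" "s \<le> 1" and t_ge: "?\<tau> k \<le> t" and t_lt: "t < ?\<tau> (Suc k)"
    and sol: "hyb_sol (\<lambda>_. r) F x0 u t = (1 - s) *\<^sub>R ?x k + s *\<^sub>R ?x (Suc k)"
    by (rule hyb_sol_between_grid_points[OF u r t])
  define b where "b = K * norm x0 * exp (- \<alpha> * ?\<tau> k)"
  have "exp (- \<alpha> * ?\<tau> (Suc k)) \<le> exp (- \<alpha> * ?\<tau> k)"
    using \<alpha> less_imp_le[OF hyb_step_pos[OF r]] by (simp add: hyb_grid_Suc)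
  hence xk: "norm (?x k) \<le> b" and xSk: "norm (?x (Suc k)) \<le> b"
    using grid[of k] grid[of "Suc k"] K mult_left_mono[of _ _ "K * norm x0"] unfolding b_def
    by (auto intro: order.trans)
  have "norm (hyb_sol (\<lambda>_. r) F x0 u t) \<le> (1 - s) * norm (?x k) + s * norm (?x (Suc k))"
    unfolding sol using s by (metis abs_of_nonneg diff_ge_0_iff_ge norm_scaleR norm_triangle_ineq)
  also have "\<dots> \<le> (1 - s) * b + s * b"
    using s xk xSk by (intro add_mono mult_left_mono) auto
  also have "\<dots> = K * norm x0 * exp (- \<alpha> * ?\<tau> k)" unfolding b_def by (simp add: algebra_simps)
  also have "\<dots> \<le> K * norm x0 * exp (\<alpha> * r - \<alpha> * t)"
  proof -
    have "t - r \<le> ?\<tau> k" using t_lt hyb_step_le[OF u r, of F x0 k] by (simp add: hyb_grid_Suc)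
    hence "\<alpha> * t \<le> \<alpha> * (r + ?\<tau> k)" using \<alpha> by (intro mult_left_mono) auto
    hence "- \<alpha> * ?\<tau> k \<le> \<alpha> * r - \<alpha> * t" by (simp add: algebra_simps)
    thus ?thesis using K by (intro mult_left_mono) auto
  qed
  finally show ?thesis by (simp add: exp_diff exp_minus field_simps)
qed

lemma exp_decay_imp_URGAS:
  fixes F :: "real \<Rightarrow> real^'n::finite \<Rightarrow> real^'n"
  assumes K: "K \<ge> 0" and \<alpha>: "\<alpha> > 0"
    and decay: "\<And>x0 u t. admissible_input u \<Longrightarrow> t \<ge> 0 \<Longrightarrow>
                   norm (hyb_sol \<phi> F x0 u t) \<le> K * norm x0 * exp (- \<alpha> * t)"
  shows "URGAS \<phi> F"
proof -
  have bounded: "norm (hyb_sol \<phi> F x0 u t) \<le> K * norm x0"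
    if "admissible_input u" "t \<ge> 0" for x0 u t
  proof -
    have "K * norm x0 * exp (- \<alpha> * t) \<le> K * norm x0" using K \<alpha> that(2) by (simp add: mult_left_le)
    thus ?thesis using decay[of u t x0, OF that] by linarith
  qed
  have stable: "\<exists>\<delta>>0. \<forall>x0 u t. norm x0 < \<delta> \<and> admissible_input u \<and> t \<ge> 0
                 \<longrightarrow> norm (hyb_sol \<phi> F x0 u t) < \<epsilon>" if e: "\<epsilon> > 0" for \<epsilon>
  proof (intro exI[of _ "\<epsilon> / (K + 1)"] conjI allI impI)
    show "\<epsilon> / (K + 1) > 0" using e K by simp
    fix x0 :: "real^'n" and u :: "real \<Rightarrow> real" and t :: real assume "norm x0 < \<epsilon> / (K + 1) \<and> admissible_input u \<and> t \<ge> 0"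
    moreover have "K * (\<epsilon> / (K + 1)) < \<epsilon>" using e K by (simp add: field_simps)
    ultimately show "norm (hyb_sol \<phi> F x0 u t) < \<epsilon>"
      using bounded[of u t x0] K mult_left_mono[of "norm x0" "\<epsilon> / (K + 1)" K] by auto
  qed
  have bounded_R: "\<exists>B. \<forall>x0 u t. norm x0 \<le> R \<and> admissible_input u \<and> t \<ge> 0
                     \<longrightarrow> norm (hyb_sol \<phi> F x0 u t) \<le> B" for R
    using bounded K by (intro exI[of _ "K * R"]) (meson mult_left_mono order.trans)
  have attractive: "\<exists>T. \<forall>x0 u t. norm x0 \<le> R \<and> admissible_input u \<and> t \<ge> T
                      \<longrightarrow> norm (hyb_sol \<phi> F x0 u t) \<le> \<epsilon>" if e: "\<epsilon> > 0" for \<epsilon> R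
  proof (intro exI[of _ "K * \<bar>R\<bar> / (\<epsilon> * \<alpha>)"] allI impI)
    fix x0 :: "real^'n" and u :: "real \<Rightarrow> real" and t :: real assume h: "norm x0 \<le> R \<and> admissible_input u \<and> t \<ge> K * \<bar>R\<bar> / (\<epsilon> * \<alpha>)"
    hence t0: "t \<ge> 0" using K e \<alpha> by (meson divide_nonneg_pos abs_ge_zero mult_nonneg_nonneg
        mult_pos_pos order.trans)
    have "K * norm x0 \<le> K * \<bar>R\<bar>" using h K by (intro mult_left_mono) auto
    also have "\<dots> \<le> \<epsilon> * \<alpha> * t" using h e \<alpha> by (simp add: field_simps)
    also have "\<dots> \<le> \<epsilon> * exp (\<alpha> * t)"
    proof -
      have "\<alpha> * t \<le> exp (\<alpha> * t)" using exp_ge_add_one_self[of "\<alpha> * t"] by linarith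
      thus ?thesis using mult_left_mono[of "\<alpha> * t" "exp (\<alpha> * t)" \<epsilon>] e by (simp add: mult.assoc)
    qed
    finally have "K * norm x0 * exp (- \<alpha> * t) \<le> \<epsilon>"
      by (simp add: exp_minus field_simps)
    thus "norm (hyb_sol \<phi> F x0 u t) \<le> \<epsilon>" using decay[of u t x0] h t0 by linarith
  qed
  show ?thesis unfolding URGAS_def using stable bounded_R attractive by blast
qed

subsection \<open>Uniform exponential decay of the implicit Euler method\<close>

lemma implicit_euler_lyapunov_decay:
  fixes A :: "real^'n::finite^'n" and W C :: "complex^'n^'n"
  assumes H: "hurwitz A" and r: "r > 0" and \<mu>: "\<mu> > 0" and u: "admissible_input u"
    and WC: "W ** cmat A = C ** W" and diss: "\<And>z. inner z (C *v z) \<le> -\<mu> * (norm z)^2"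
  shows "(norm (W *v cx (hyb_state (\<lambda>_. r) (implicit_euler_F A) x0 u i)))^2
    \<le> exp (- (2*\<mu>/(1+2*\<mu>*r)) * hyb_tau (\<lambda>_. r) (implicit_euler_F A) x0 u i) * (norm (W *v cx x0))^2"
proof (induction i)
  case 0
  show ?case by (simp add: hyb_grid_0)
next
  case (Suc i)
  let ?\<kappa> = "2*\<mu>/(1+2*\<mu>*r)" and ?h = "hyb_step (\<lambda>_. r) (implicit_euler_F A) x0 u i"
    and ?\<tau> = "hyb_tau (\<lambda>_. r) (implicit_euler_F A) x0 u"
    and ?V = "\<lambda>x. (norm (W *v cx x))^2" and ?x = "hyb_state (\<lambda>_. r) (implicit_euler_F A) x0 u"
  have h0: "0 \<le> ?h" using hyb_step_pos[OF r] by (rule less_imp_le)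
  have contraction: "?V (?x (Suc i)) * (1 + 2*\<mu>*?h) \<le> ?V (?x i)"
    by (rule implicit_euler_contraction[OF WC diss h0])
      (simp only: hyb_grid_Suc implicit_euler_step[OF H h0])
  have factor: "1 \<le> (1 + 2*\<mu>*?h) * exp (- ?\<kappa> * ?h)"
    using exp_le_one_plus_step[OF \<mu> r h0 hyb_step_le[OF u r]] .
  have "?V (?x (Suc i)) \<le> ?V (?x (Suc i)) * ((1 + 2*\<mu>*?h) * exp (- ?\<kappa> * ?h))"
    using mult_left_mono[OF factor, of "?V (?x (Suc i))"] by simp
  also have "\<dots> = (?V (?x (Suc i)) * (1 + 2*\<mu>*?h)) * exp (- ?\<kappa> * ?h)" by (simp only: mult.assoc)
  also have "\<dots> \<le> ?V (?x i) * exp (- ?\<kappa> * ?h)" by (rule mult_right_mono[OF contraction]) simp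
  also have "\<dots> \<le> exp (- ?\<kappa> * ?\<tau> i) * ?V x0 * exp (- ?\<kappa> * ?h)"
    by (rule mult_right_mono[OF Suc.IH]) simp
  also have "\<dots> = exp (- ?\<kappa> * ?\<tau> (Suc i)) * ?V x0"
    by (simp add: hyb_grid_Suc algebra_simps exp_add[symmetric])
  finally show ?case .
qed

text \<open>Since V is equivalent to the norm, the grid states decay exponentially in norm,
  with constants depending only on A and r.\<close>
lemma implicit_euler_grid_decay:
  fixes A :: "real^'n::finite^'n"
  assumes H: "hurwitz A" and r: "r > 0"
  obtains K \<alpha> where "K \<ge> 0" "\<alpha> > 0"
    "\<And>x0 u i. admissible_input u \<Longrightarrow> norm (hyb_state (\<lambda>_. r) (implicit_euler_F A) x0 u i)
        \<le> K * norm x0 * exp (- \<alpha> * hyb_tau (\<lambda>_. r) (implicit_euler_F A) x0 u i)"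
proof -
  obtain W Wi C :: "complex^'n^'n" and \<mu> where \<mu>: "\<mu> > 0" and inv: "Wi ** W = cart_one"
    and WC: "W ** cmat A = C ** W" and diss: "\<And>z. inner z (C *v z) \<le> -\<mu> * (norm z)^2"
    using hurwitz_similar_dissipative[OF H] by metis
  obtain c1 where c1: "c1 > 0" "\<And>z. norm (Wi *v z) \<le> norm z * c1"
    using bounded_linear.pos_bounded[OF matrix_vector_mul_bounded_linear[of Wi]] by blast
  obtain c2 where c2: "c2 > 0" "\<And>z. norm (W *v z) \<le> norm z * c2"
    using bounded_linear.pos_bounded[OF matrix_vector_mul_bounded_linear[of W]] by blast
  define \<kappa> where "\<kappa> = 2*\<mu>/(1+2*\<mu>*r)"
  have \<kappa>: "\<kappa> > 0" unfolding \<kappa>_def using \<mu> r by (simp add: add_pos_pos)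
  have "norm (hyb_state (\<lambda>_. r) (implicit_euler_F A) x0 u i)
      \<le> c1 * c2 * norm x0 * exp (- (\<kappa>/2) * hyb_tau (\<lambda>_. r) (implicit_euler_F A) x0 u i)"
    if u: "admissible_input u" for x0 u i
  proof -
    let ?x = "hyb_state (\<lambda>_. r) (implicit_euler_F A) x0 u i"
      and ?e = "exp (- (\<kappa>/2) * hyb_tau (\<lambda>_. r) (implicit_euler_F A) x0 u i)"
    have "?e^2 = exp (- \<kappa> * hyb_tau (\<lambda>_. r) (implicit_euler_F A) x0 u i)"
      by (simp add: power2_eq_square flip: exp_add)
    hence "(norm (W *v cx ?x))^2 \<le> (?e * norm (W *v cx x0))^2"
      using implicit_euler_lyapunov_decay[OF H r \<mu> u WC diss, of x0 i]
      by (simp add: power_mult_distrib \<kappa>_def)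
    hence V_decay: "norm (W *v cx ?x) \<le> ?e * norm (W *v cx x0)"
      by (rule power2_le_imp_le) simp
    have "norm ?x = norm (Wi *v (W *v cx ?x))" by (simp add: matrix_vector_mul_assoc inv norm_cx)
    also have "\<dots> \<le> norm (W *v cx ?x) * c1" by (rule c1(2))
    also have "\<dots> \<le> ?e * norm (W *v cx x0) * c1" using V_decay c1 by (simp add: mult_right_mono)
    also have "\<dots> \<le> ?e * (norm x0 * c2) * c1"
      using c2(2)[of "cx x0"] c1 by (intro mult_right_mono mult_left_mono) (auto simp: norm_cx)
    finally show ?thesis by (simp add: mult_ac)
  qed
  with that[of "c1 * c2" "\<kappa>/2"] c1 c2 \<kappa> show thesis by simp
qed

theorem corollary4p16:
  fixes A :: "real^'n^'n" and r :: real
  assumes "hurwitz A" and "r > 0"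
  shows "URGAS (\<lambda>_. r) (implicit_euler_F A)"
proof -
  obtain K \<alpha> where K: "K \<ge> 0" and \<alpha>: "\<alpha> > 0"
    and grid: "\<And>x0 u i. admissible_input u \<Longrightarrow> norm (hyb_state (\<lambda>_. r) (implicit_euler_F A) x0 u i)
        \<le> K * norm x0 * exp (- \<alpha> * hyb_tau (\<lambda>_. r) (implicit_euler_F A) x0 u i)"
    using implicit_euler_grid_decay[OF assms] by metis
  show ?thesis
  proof (rule exp_decay_imp_URGAS)
    show "K * exp (\<alpha> * r) \<ge> 0" using K by simp
    show "\<alpha> > 0" by (fact \<alpha>)
    fix x0 :: "real^'n" and u :: "real \<Rightarrow> real" and t :: real assume u: "admissible_input u" and t: "t \<ge> 0"
    show "norm (hyb_sol (\<lambda>_. r) (implicit_euler_F A) x0 u t) \<le> K * exp (\<alpha> * r) * norm x0 * exp (- \<alpha> * t)"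
      by (rule hyb_sol_decay[OF u \<open>r > 0\<close> t K \<alpha> grid[OF u]])
  qed
qed

end
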